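(* Let $\mathbb D=\{z\in\mathbb C:|z|<1\}$ and let $\mathcal P$ be the set of holomorphic functions $p$ on $\mathbb D$ with $\operatorname{Re} p(z)>0$ for all $z\in\mathbb D$ (no normalization $p(0)=1$ is imposed). For $p\in\mathcal P$ and $0<r<1$ set \[ I_p(r):=\int_0^{2\pi}\left|\frac{z p'(z)}{p(z)}\right|^2\,d\theta,\qquad z=re^{i\theta}. \] Then: (i) there exists an absolute constant $C>0$ such that $I_p(r)\le C(1-r)^{-2}$ for all $p\in\mathcal P$ and $0<r<1$; (ii) for each fixed $p\in\mathcal P$, $I_p(r)=o\bigl((1-r)^{-2}\bigr)$ as $r\to1^-$; (iii) if $\Phi:(0,1)\to(0,\infty)$ satisfies $\Phi(r)=o\bigl((1-r)^{-2}\bigr)$ as $r\to1^-$, then there exists $p_\Phi\in\mathcal P$ with $I_{p_\Phi}(r)\ne O(\Phi(r))$ as $r\to1^-$; (iv) $2$ is the least real exponent $\alpha$ for which there exists a constant $C_\alpha$ (independent of $p$) with $I_p(r)\le C_\alpha(1-r)^{-\alpha}$ for all $p\in\mathcal P$ and $0<r<1$. In particular, it is not true that $I_p(r)=O\bigl((1-r)^{-1}\bigr)$ as $r\to1^-$ for every $p\in\mathcal P$. *)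

theory Defs
  imports "HOL-Analysis.Analysis" "HOL-Library.Landau_Symbols"
begin

definition carath_class :: "(complex \<Rightarrow> complex) set" where
  "carath_class = {p. p holomorphic_on ball 0 1 \<and> (\<forall>z\<in>ball 0 1. Re (p z) > 0)}"

definition I_int :: "(complex \<Rightarrow> complex) \<Rightarrow> real \<Rightarrow> real" where
  "I_int p r = integral {0..2*pi}
     (\<lambda>\<theta>. (cmod ((of_real r * cis \<theta>) * deriv p (of_real r * cis \<theta>) / p (of_real r * cis \<theta>)))\<^sup>2)"

end

theory Submission
  imports Defs "HOL-Complex_Analysis.Complex_Analysis" "HOL-Real_Asymp.Real_Asymp"
begin

(* Every p in the class is exp f with f = Ln p holomorphic and |Im f| < pi/2 on the disc, and
   z p'/p = z f' = sum n a_n z^n, so Parseval gives I_p(r) = 2 pi sum n^2 |a_n|^2 r^(2n).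
   Parseval applied to Im f itself bounds sum_(n>=1) |a_n|^2 by pi^2/2 for every p; with
   n r^n <= 1/(1-r) this gives (i), and dominated convergence of the series of
   |a_n|^2 (n (1-r) r^n)^2 gives (ii). For (iii) a lacunary series with coefficient 2^-(k+1) at
   a sparse sequence of exponents N_k has |f| <= 1, while its single term at N_k already makes
   I_p(1 - 1/(4 N_k)) of size N_k^2 4^-k, which beats Phi there once N_k is chosen large.
   (iv) and the final claim follow from (i) and (iii). *)

lemma has_integral_cis_multiple:
  fixes k :: int
  shows "((\<lambda>\<theta>. cis (of_int k * \<theta>)) has_integral (if k = 0 then 2*pi else 0)) {0..2*pi}"
proof (cases "k = 0")
  case True
  then show ?thesis
    using has_integral_const_real[of "1::complex" 0 "2*pi"] by (simp add: scaleR_conv_of_real)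
next
  case False
  define F where "F = (\<lambda>\<theta>. cis (of_int k * \<theta>) / (\<i> * of_int k))"
  have "(F has_vector_derivative cis (of_int k * \<theta>)) (at \<theta> within {0..2*pi})" for \<theta>
  proof -
    have "((\<lambda>\<theta>. cis (of_int k * \<theta>)) has_vector_derivative \<i> * of_int k * cis (of_int k * \<theta>))
            (at \<theta> within {0..2*pi})"
      unfolding has_vector_derivative_def
      by (rule has_derivative_eq_rhs, (intro has_derivative_cis derivative_eq_intros; simp))
         (auto simp: scaleR_conv_of_real algebra_simps)
    then show ?thesis
      unfolding F_def using False by (auto intro: has_vector_derivative_eq_rhs derivative_eq_intros)
  qed
  then have "((\<lambda>\<theta>. cis (of_int k * \<theta>)) has_integral F (2*pi) - F 0) {0..2*pi}"
    by (intro fundamental_theorem_of_calculus) auto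
  moreover have "cis (of_int k * (2*pi)) = 1"
    using cis_multiple_2pi[of "of_int k"] by (simp add: mult.commute)
  ultimately show ?thesis
    using False by (simp add: F_def)
qed

lemma has_integral_suminf:
  fixes g :: "nat \<Rightarrow> real \<Rightarrow> 'a::banach"
  assumes cont: "\<And>n. continuous_on {a..b} (g n)"
    and bound: "\<And>n x. x \<in> {a..b} \<Longrightarrow> norm (g n x) \<le> M n" and M: "summable M"
  shows "((\<lambda>x. \<Sum>n. g n x) has_integral (\<Sum>n. integral {a..b} (g n))) {a..b}"
    and "summable (\<lambda>n. integral {a..b} (g n))"
proof -
  have unif: "uniform_limit {a..b} (\<lambda>N x. \<Sum>n<N. g n x) (\<lambda>x. \<Sum>n. g n x) sequentially"
    by (rule Weierstrass_m_test[OF bound M])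
  obtain I J where I: "\<And>N. ((\<lambda>x. \<Sum>n<N. g n x) has_integral I N) {a..b}"
    and J: "((\<lambda>x. \<Sum>n. g n x) has_integral J) {a..b}" and lim: "I \<longlonglongrightarrow> J"
    by (rule uniform_limit_integral[OF unif]) (auto intro!: continuous_intros cont)
  have "I N = (\<Sum>n<N. integral {a..b} (g n))" for N
    by (intro has_integral_unique[OF I] has_integral_sum integrable_integral
        integrable_continuous_interval cont) simp
  then have "I = (\<lambda>N. \<Sum>n<N. integral {a..b} (g n))" ..
  then have "(\<lambda>n. integral {a..b} (g n)) sums J"
    using lim by (simp add: sums_def)
  then show "((\<lambda>x. \<Sum>n. g n x) has_integral (\<Sum>n. integral {a..b} (g n))) {a..b}"
    and "summable (\<lambda>n. integral {a..b} (g n))"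
    using J by (auto simp: sums_iff)
qed

lemma has_integral_suminf_mult:
  fixes u v :: "nat \<Rightarrow> real \<Rightarrow> 'a::{banach, real_normed_div_algebra}"
  assumes cont_u: "\<And>n. continuous_on {a..b} (u n)" and cont_v: "\<And>n. continuous_on {a..b} (v n)"
    and bound_u: "\<And>n x. x \<in> {a..b} \<Longrightarrow> norm (u n x) \<le> U n"
    and bound_v: "\<And>n x. x \<in> {a..b} \<Longrightarrow> norm (v n x) \<le> V n"
    and U: "summable U" and V: "summable V"
  shows "((\<lambda>x. (\<Sum>n. u n x) * (\<Sum>m. v m x)) has_integral
           (\<Sum>n. \<Sum>m. integral {a..b} (\<lambda>x. u n x * v m x))) {a..b}"
    and "summable (\<lambda>n. \<Sum>m. integral {a..b} (\<lambda>x. u n x * v m x))"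
proof -
  define G where "G = (\<lambda>x. \<Sum>m. v m x)"
  have summable_u: "summable (\<lambda>n. norm (u n x))" if "x \<in> {a..b}" for x
    by (rule summable_comparison_test[OF _ U]) (use bound_u that in auto)
  have summable_v: "summable (\<lambda>m. norm (v m x))" if "x \<in> {a..b}" for x
    by (rule summable_comparison_test[OF _ V]) (use bound_v that in auto)
  have cont_G: "continuous_on {a..b} G"
    unfolding G_def
    by (rule uniform_limit_theorem[OF _ Weierstrass_m_test[OF bound_v V]])
       (auto intro!: always_eventually continuous_intros cont_v)
  have bound_G: "norm (G x) \<le> (\<Sum>m. V m)" if "x \<in> {a..b}" for x
    unfolding G_def using summable_v[OF that] bound_v[OF that]
    by (intro order.trans[OF summable_norm suminf_le] V) auto
  have bound_uv: "norm (u n x * v m x) \<le> U n * V m" if "x \<in> {a..b}" for n m x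
    unfolding norm_mult using bound_u[OF that] bound_v[OF that]
    by (intro mult_mono') auto
  have bound_uG: "norm (u n x * G x) \<le> U n * (\<Sum>m. V m)" if "x \<in> {a..b}" for n x
    unfolding norm_mult using bound_u[OF that] bound_G[OF that]
    by (intro mult_mono') auto
  have integral_uG:
    "integral {a..b} (\<lambda>x. u n x * G x) = (\<Sum>m. integral {a..b} (\<lambda>x. u n x * v m x))" for n
  proof (rule integral_unique, rule has_integral_eq)
    show "((\<lambda>x. \<Sum>m. u n x * v m x) has_integral (\<Sum>m. integral {a..b} (\<lambda>x. u n x * v m x)))
        {a..b}"
      by (rule has_integral_suminf(1)[where g = "\<lambda>m x. u n x * v m x" and a = a and b = b,
            OF _ bound_uv summable_mult[OF V]])
         (intro continuous_intros cont_u cont_v)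
    show "(\<Sum>m. u n x * v m x) = u n x * G x" if "x \<in> {a..b}" for x
      using that summable_norm_cancel[OF summable_v] by (simp add: G_def suminf_mult)
  qed
  have series: "((\<lambda>x. \<Sum>n. u n x * G x) has_integral
      (\<Sum>n. \<Sum>m. integral {a..b} (\<lambda>x. u n x * v m x))) {a..b}"
    and "summable (\<lambda>n. \<Sum>m. integral {a..b} (\<lambda>x. u n x * v m x))"
    using has_integral_suminf[where g = "\<lambda>n x. u n x * G x" and a = a and b = b,
        OF _ bound_uG summable_mult2[OF U]]
    unfolding integral_uG by (auto intro!: continuous_intros cont_u cont_G)
  then show "summable (\<lambda>n. \<Sum>m. integral {a..b} (\<lambda>x. u n x * v m x))" by blast
  have "(\<Sum>n. u n x * G x) = (\<Sum>n. u n x) * (\<Sum>m. v m x)" if "x \<in> {a..b}" for x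
    using that summable_norm_cancel[OF summable_u] by (simp add: G_def suminf_mult2)
  from has_integral_eq[OF this series]
  show "((\<lambda>x. (\<Sum>n. u n x) * (\<Sum>m. v m x)) has_integral
           (\<Sum>n. \<Sum>m. integral {a..b} (\<lambda>x. u n x * v m x))) {a..b}" .
qed

text \<open>With \<open>\<sigma> = -1\<close> the second factor is the conjugate of a power series (Parseval), with
  \<open>\<sigma> = 1\<close> a second power series (mean value of the square).\<close>

lemma has_integral_power_series_circle_mult:
  fixes c d :: "nat \<Rightarrow> complex" and \<sigma> :: int
  assumes r: "0 \<le> r" and c: "summable (\<lambda>n. norm (c n) * r ^ n)"
    and d: "summable (\<lambda>n. norm (d n) * r ^ n)"
  defines "K \<equiv> \<lambda>n m. if int n + \<sigma> * int m = 0
                        then of_real (2 * pi * r ^ (n + m)) * c n * d m else 0"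
  shows "((\<lambda>\<theta>. (\<Sum>n. c n * (of_real r * cis \<theta>) ^ n) *
                (\<Sum>m. d m * (of_real r * cis (of_int \<sigma> * \<theta>)) ^ m))
           has_integral (\<Sum>n. \<Sum>m. K n m)) {0..2*pi}"
    and "summable (\<lambda>n. \<Sum>m. K n m)"
proof -
  define u where "u = (\<lambda>n \<theta>. c n * (of_real r * cis \<theta>) ^ n)"
  define v where "v = (\<lambda>m \<theta>. d m * (of_real r * cis (of_int \<sigma> * \<theta>)) ^ m)"
  have "u n \<theta> * v m \<theta> = of_real (r ^ (n + m)) * c n * d m * cis (of_int (int n + \<sigma> * int m) * \<theta>)"
    for n m \<theta>
    by (simp add: u_def v_def power_mult_distrib Complex.DeMoivre cis_mult power_add algebra_simps)
  then have integral_uv: "integral {0..2*pi} (\<lambda>\<theta>. u n \<theta> * v m \<theta>) = K n m" for n m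
    using has_integral_mult_right[OF has_integral_cis_multiple[of "int n + \<sigma> * int m"],
        where c = "of_real (r ^ (n + m)) * c n * d m"]
    by (intro integral_unique) (auto simp: K_def mult_ac)
  have "continuous_on {0..2*pi} (u n)" "continuous_on {0..2*pi} (v n)" for n
    by (auto simp: u_def v_def intro!: continuous_intros)
  moreover have "norm (u n \<theta>) \<le> norm (c n) * r ^ n" "norm (v n \<theta>) \<le> norm (d n) * r ^ n" for n \<theta>
    using r by (simp_all add: u_def v_def norm_mult norm_power)
  ultimately show "((\<lambda>\<theta>. (\<Sum>n. c n * (of_real r * cis \<theta>) ^ n) *
                (\<Sum>m. d m * (of_real r * cis (of_int \<sigma> * \<theta>)) ^ m))
           has_integral (\<Sum>n. \<Sum>m. K n m)) {0..2*pi}"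
    and "summable (\<lambda>n. \<Sum>m. K n m)"
    using has_integral_suminf_mult[where u = u and v = v and a = 0 and b = "2*pi", OF _ _ _ _ c d]
    unfolding integral_uv by (simp_all add: u_def v_def)
qed

lemma has_integral_power_series_circle_norm_square:
  fixes c :: "nat \<Rightarrow> complex"
  assumes r: "0 \<le> r" and c: "summable (\<lambda>n. norm (c n) * r ^ n)"
  shows "((\<lambda>\<theta>. (norm (\<Sum>n. c n * (of_real r * cis \<theta>) ^ n))\<^sup>2)
           has_integral 2 * pi * (\<Sum>n. (norm (c n))\<^sup>2 * r ^ (2 * n))) {0..2*pi}"
    and "summable (\<lambda>n. (norm (c n))\<^sup>2 * r ^ (2 * n))"
proof -
  define F where "F = (\<lambda>\<theta>. \<Sum>n. c n * (of_real r * cis \<theta>) ^ n)"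
  define X where "X = (\<lambda>n. 2 * pi * (norm (c n))\<^sup>2 * r ^ (2 * n))"
  have summable_F: "summable (\<lambda>n. c n * (of_real r * cis \<theta>) ^ n)" for \<theta>
    using r c by (intro summable_norm_cancel[of "\<lambda>n. c n * (of_real r * cis \<theta>) ^ n"])
      (simp add: norm_mult norm_power)
  have cnj_F: "(\<Sum>m. cnj (c m) * (of_real r * cis (of_int (-1) * \<theta>)) ^ m) = cnj (F \<theta>)" for \<theta>
  proof -
    have "(\<lambda>m. cnj (c m * (of_real r * cis \<theta>) ^ m)) sums cnj (F \<theta>)"
      unfolding F_def sums_cnj by (rule summable_sums[OF summable_F])
    moreover have "cnj (c m * (of_real r * cis \<theta>) ^ m) = cnj (c m) * (of_real r * cis (of_int (-1) * \<theta>)) ^ m"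
      for m by (simp add: cis_cnj)
    ultimately have "(\<lambda>m. cnj (c m) * (of_real r * cis (of_int (-1) * \<theta>)) ^ m) sums cnj (F \<theta>)"
      by (simp only:)
    then show ?thesis by (rule sums_unique[symmetric])
  qed
  have diagonal: "(\<Sum>m. if int n + (-1) * int m = 0
                     then of_real (2 * pi * r ^ (n + m)) * c n * cnj (c m) else 0) = of_real (X n)" for n
  proof -
    have "(\<lambda>m. if int n + (-1) * int m = 0 then of_real (2 * pi * r ^ (n + m)) * c n * cnj (c m) else 0)
        = (\<lambda>m. if m = n then of_real (X n) else 0)"
    proof
      fix m
      have "2 * pi * r ^ (n + n) * (norm (c n))\<^sup>2 = X n"
        by (simp add: X_def mult_ac flip: mult_2[of n])
      then have "of_real (2 * pi * r ^ (n + n)) * c n * cnj (c n) = complex_of_real (X n)"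
        by (simp only: mult.assoc complex_norm_square[symmetric] of_real_mult[symmetric])
      then show "(if int n + (-1) * int m = 0 then of_real (2 * pi * r ^ (n + m)) * c n * cnj (c m) else 0)
          = (if m = n then of_real (X n) else 0)"
        by auto
    qed
    then show ?thesis
      using sums_single[of n "\<lambda>_. complex_of_real (X n)"] by (simp add: sums_iff)
  qed
  have "summable (\<lambda>n. norm (cnj (c n)) * r ^ n)"
    using c by simp
  note product = has_integral_power_series_circle_mult[OF r c this, of "-1",
      unfolded diagonal cnj_F]
  have "summable X"
    using product(2) by (simp only: summable_of_real_iff)
  then show summable: "summable (\<lambda>n. (norm (c n))\<^sup>2 * r ^ (2 * n))"
    by (simp add: X_def mult.assoc)
  have "((\<lambda>\<theta>. Re (F \<theta> * cnj (F \<theta>))) has_integral Re (\<Sum>n. complex_of_real (X n))) {0..2*pi}"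
    using product(1) by (intro has_integral_Re) (simp add: F_def)
  moreover have "(\<Sum>n. complex_of_real (X n)) = of_real (\<Sum>n. X n)"
    by (rule suminf_of_real[OF \<open>summable X\<close>, symmetric])
  moreover have "(\<Sum>n. X n) = 2 * pi * (\<Sum>n. (norm (c n))\<^sup>2 * r ^ (2 * n))"
    using suminf_mult[OF summable, of "2 * pi"] by (simp add: X_def mult.assoc)
  ultimately show "((\<lambda>\<theta>. (norm (\<Sum>n. c n * (of_real r * cis \<theta>) ^ n))\<^sup>2)
           has_integral 2 * pi * (\<Sum>n. (norm (c n))\<^sup>2 * r ^ (2 * n))) {0..2*pi}"
    by (simp add: F_def flip: complex_norm_square)
qed

lemma has_integral_power_series_circle_Im_square:
  fixes c :: "nat \<Rightarrow> complex"
  assumes r: "0 \<le> r" and c: "summable (\<lambda>n. norm (c n) * r ^ n)"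
  shows "((\<lambda>\<theta>. (Im (\<Sum>n. c n * (of_real r * cis \<theta>) ^ n))\<^sup>2)
           has_integral pi * ((\<Sum>n. (norm (c n))\<^sup>2 * r ^ (2 * n)) - Re ((c 0)\<^sup>2))) {0..2*pi}"
proof -
  define F where "F \<theta> = (\<Sum>n. c n * (of_real r * cis \<theta>) ^ n)" for \<theta>
  have "(\<Sum>m. if int n + 1 * int m = 0 then of_real (2 * pi * r ^ (n + m)) * c n * c m else 0)
          = (if n = 0 then of_real (2 * pi) * (c 0)\<^sup>2 else 0)" for n
  proof -
    have "(\<lambda>m. if int n + 1 * int m = 0 then of_real (2 * pi * r ^ (n + m)) * c n * c m else 0)
        = (\<lambda>m. if m = 0 then if n = 0 then of_real (2 * pi) * (c 0)\<^sup>2 else 0 else 0)"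
      by (auto simp: power2_eq_square)
    then show ?thesis
      using sums_single[of 0 "\<lambda>_. if n = 0 then of_real (2 * pi) * (c 0)\<^sup>2 else 0"]
      by (simp add: sums_iff)
  qed
  then have "((\<lambda>\<theta>. F \<theta> * F \<theta>) has_integral of_real (2 * pi) * (c 0)\<^sup>2) {0..2*pi}"
    using has_integral_power_series_circle_mult(1)[OF r c c, of 1]
      sums_single[of 0 "\<lambda>_. of_real (2 * pi) * (c 0)\<^sup>2"]
    by (simp add: F_def sums_iff)
  from has_integral_Re[OF this]
  have mean_square: "((\<lambda>\<theta>. Re (F \<theta> * F \<theta>)) has_integral 2 * pi * Re ((c 0)\<^sup>2)) {0..2*pi}"
    by simp
  have "((\<lambda>\<theta>. ((norm (F \<theta>))\<^sup>2 - Re (F \<theta> * F \<theta>)) / 2) has_integral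
      (2 * pi * (\<Sum>n. (norm (c n))\<^sup>2 * r ^ (2 * n)) - 2 * pi * Re ((c 0)\<^sup>2)) / 2) {0..2*pi}"
    using has_integral_power_series_circle_norm_square(1)[OF r c]
    by (intro has_integral_divide has_integral_diff mean_square) (simp add: F_def)
  moreover have "((norm w)\<^sup>2 - Re (w * w)) / 2 = (Im w)\<^sup>2" for w :: complex
    by (simp add: cmod_power2) (simp add: power2_eq_square)
  moreover have "(2 * pi * S - 2 * pi * R) / 2 = pi * (S - R)" for S R :: real
    by (simp add: field_simps)
  ultimately show ?thesis
    by (simp only: F_def)
qed

lemma power_series_abs_summable_disc:
  fixes a :: "nat \<Rightarrow> 'a::{real_normed_div_algebra, banach}"
  assumes summable: "\<And>z. norm z < 1 \<Longrightarrow> summable (\<lambda>n. a n * z ^ n)" and r: "0 \<le> r" "r < 1"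
  shows "summable (\<lambda>n. norm (a n) * r ^ n)"
proof -
  have "norm (of_real ((1 + r) / 2) :: 'a) < 1" "norm (of_real r :: 'a) < norm (of_real ((1 + r) / 2) :: 'a)"
    unfolding norm_of_real using r by auto
  then have "summable (\<lambda>n. norm (a n * of_real r ^ n))"
    by (intro powser_insidea[OF summable])
  then show ?thesis
    using r by (simp add: norm_mult norm_power)
qed

lemma power_series_times_deriv_disc:
  fixes a :: "nat \<Rightarrow> 'a::{real_normed_field, banach}"
  assumes sums: "\<And>z. norm z < 1 \<Longrightarrow> (\<lambda>n. a n * z ^ n) sums f z" and z: "norm z < 1"
  obtains D where "(f has_field_derivative D) (at z)" and "(\<lambda>n. of_nat n * a n * z ^ n) sums (z * D)"
proof
  define D where "D = (\<Sum>n. diffs a n * z ^ n)"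
  have summable: "summable (\<lambda>n. a n * w ^ n)" if "norm w < 1" for w
    using sums[OF that] by (rule sums_summable)
  have "((\<lambda>w. \<Sum>n. a n * w ^ n) has_field_derivative D) (at z)"
    unfolding D_def by (rule termdiffs_strong'[OF summable z])
  then show "(f has_field_derivative D) (at z)"
    by (rule has_field_derivative_transform_within_open[where S = "ball 0 1"])
       (use z sums in \<open>auto simp: sums_iff\<close>)
  have "(\<lambda>n. of_nat n * a n * z ^ (n - 1)) sums D"
    using diffs_equiv[OF termdiff_converges[OF z summable]] by (simp add: D_def)
  from sums_mult[OF this, of z]
  show "(\<lambda>n. of_nat n * a n * z ^ n) sums (z * D)"
    by (rule sums_cong[THEN iffD1, rotated]) (auto simp: power_eq_if)
qed

lemma I_int_exp_power_series:
  fixes a :: "nat \<Rightarrow> complex"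
  assumes sums: "\<And>z. norm z < 1 \<Longrightarrow> (\<lambda>n. a n * z ^ n) sums f z"
    and p: "\<And>z. norm z < 1 \<Longrightarrow> p z = exp (f z)" and r: "0 \<le> r" "r < 1"
  shows "(\<lambda>n. (norm (a n))\<^sup>2 * (real n * r ^ n)\<^sup>2) sums (I_int p r / (2 * pi))"
proof -
  define c where "c n = of_nat n * a n" for n
  have log_deriv: "(\<lambda>n. c n * z ^ n) sums (z * deriv p z / p z)" if z: "norm z < 1" for z
  proof -
    obtain D where D: "(f has_field_derivative D) (at z)"
      and sums_D: "(\<lambda>n. of_nat n * a n * z ^ n) sums (z * D)"
      using power_series_times_deriv_disc[OF sums z] by blast
    have "((\<lambda>w. exp (f w)) has_field_derivative exp (f z) * D) (at z)"
      using D by (auto intro!: derivative_eq_intros)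
    then have "(p has_field_derivative exp (f z) * D) (at z)"
      by (rule has_field_derivative_transform_within_open[where S = "ball 0 1"]) (use z p in auto)
    then have "z * deriv p z / p z = z * D"
      using p[OF z] by (simp add: DERIV_imp_deriv)
    then show ?thesis
      using sums_D by (simp add: c_def)
  qed
  have "summable (\<lambda>n. norm (c n) * r ^ n)"
    using log_deriv by (intro power_series_abs_summable_disc[OF _ r]) (auto intro: sums_summable)
  note parseval = has_integral_power_series_circle_norm_square[OF r(1) this]
  have "norm (of_real r * cis \<theta>) < 1" for \<theta>
    using r by (simp add: norm_mult)
  then have "(\<Sum>n. c n * (of_real r * cis \<theta>) ^ n)
      = of_real r * cis \<theta> * deriv p (of_real r * cis \<theta>) / p (of_real r * cis \<theta>)" for \<theta>
    using log_deriv by (simp add: sums_iff)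
  then have "I_int p r = 2 * pi * (\<Sum>n. (norm (c n))\<^sup>2 * r ^ (2 * n))"
    unfolding I_int_def using parseval(1) by (simp add: integral_unique)
  moreover have "(norm (c n))\<^sup>2 * r ^ (2 * n) = (norm (a n))\<^sup>2 * (real n * r ^ n)\<^sup>2" for n
    by (simp add: c_def norm_mult power_mult_distrib power_mult mult_ac)
  ultimately show ?thesis
    using parseval(2) by (simp add: sums_iff)
qed

lemma power_series_Im_bounded_coeffs_circle:
  fixes a :: "nat \<Rightarrow> complex"
  assumes sums: "\<And>z. norm z < 1 \<Longrightarrow> (\<lambda>n. a n * z ^ n) sums f z"
    and Im_bound: "\<And>z. norm z < 1 \<Longrightarrow> \<bar>Im (f z)\<bar> \<le> M" and r: "0 \<le> r" "r < 1"
  shows "(\<Sum>n. (norm (a n))\<^sup>2 * r ^ (2 * n)) - (norm (a 0))\<^sup>2 \<le> 2 * M\<^sup>2"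
proof -
  define S where "S = (\<Sum>n. (norm (a n))\<^sup>2 * r ^ (2 * n))"
  have "summable (\<lambda>n. norm (a n) * r ^ n)"
    using sums by (intro power_series_abs_summable_disc[OF _ r]) (auto intro: sums_summable)
  note Im_square = has_integral_power_series_circle_Im_square[OF r(1) this, folded S_def]
  have "(Im (\<Sum>n. a n * (of_real r * cis \<theta>) ^ n))\<^sup>2 \<le> M\<^sup>2" for \<theta>
  proof -
    have "norm (of_real r * cis \<theta>) < 1"
      using r by (simp add: norm_mult)
    then have "\<bar>Im (\<Sum>n. a n * (of_real r * cis \<theta>) ^ n)\<bar> \<le> M"
      using sums Im_bound by (simp add: sums_iff)
    then show ?thesis
      using power_mono[OF _ abs_ge_zero, of _ M 2] by simp
  qed
  then have "pi * (S - Re ((a 0)\<^sup>2)) \<le> 2 * pi * M\<^sup>2"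
    using has_integral_le[OF Im_square has_integral_const_real[of "M\<^sup>2" 0 "2 * pi"]] by simp
  moreover have "Re ((a 0)\<^sup>2) \<le> (norm (a 0))\<^sup>2"
    using complex_Re_le_cmod[of "(a 0)\<^sup>2"] by (simp add: norm_power)
  ultimately show ?thesis
    unfolding S_def[symmetric] by (simp add: mult_le_cancel_left_pos)
qed

lemma power_series_Im_bounded_coeffs:
  fixes a :: "nat \<Rightarrow> complex"
  assumes sums: "\<And>z. norm z < 1 \<Longrightarrow> (\<lambda>n. a n * z ^ n) sums f z"
    and Im_bound: "\<And>z. norm z < 1 \<Longrightarrow> \<bar>Im (f z)\<bar> \<le> M"
  shows "summable (\<lambda>n. if n = 0 then 0 else (norm (a n))\<^sup>2)"
    and "(\<Sum>n. if n = 0 then 0 else (norm (a n))\<^sup>2) \<le> 2 * M\<^sup>2"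
proof -
  define B where "B = (\<lambda>n. if n = 0 then 0 else (norm (a n))\<^sup>2)"
  have B_nonneg: "0 \<le> B n" for n
    by (simp add: B_def)
  have "(\<Sum>n<N. B n * r ^ (2 * n)) \<le> 2 * M\<^sup>2" if r: "0 \<le> r" "r < 1" for N r
  proof -
    have "summable (\<lambda>n. norm (a n) * r ^ n)"
      using sums by (intro power_series_abs_summable_disc[OF _ r]) (auto intro: sums_summable)
    then have "(\<lambda>n. (norm (a n))\<^sup>2 * r ^ (2 * n)) sums (\<Sum>n. (norm (a n))\<^sup>2 * r ^ (2 * n))"
      using has_integral_power_series_circle_norm_square(2)[OF r(1)] by (simp add: summable_sums)
    from sums_diff[OF this sums_single[of 0 "\<lambda>_. (norm (a 0))\<^sup>2"]]
    have B_sums: "(\<lambda>n. B n * r ^ (2 * n)) sums ((\<Sum>n. (norm (a n))\<^sup>2 * r ^ (2 * n)) - (norm (a 0))\<^sup>2)"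
      by (rule sums_cong[THEN iffD1, rotated]) (simp add: B_def)
    have "(\<Sum>n<N. B n * r ^ (2 * n)) \<le> (\<Sum>n. B n * r ^ (2 * n))"
      using B_sums B_nonneg r by (intro sum_le_suminf) (auto simp: sums_iff)
    also have "\<dots> = (\<Sum>n. (norm (a n))\<^sup>2 * r ^ (2 * n)) - (norm (a 0))\<^sup>2"
      using B_sums by (simp add: sums_iff)
    also have "\<dots> \<le> 2 * M\<^sup>2"
      by (rule power_series_Im_bounded_coeffs_circle[OF sums Im_bound r])
    finally show ?thesis .
  qed
  then have bound: "eventually (\<lambda>r. (\<Sum>n<N. B n * r ^ (2 * n)) \<le> 2 * M\<^sup>2) (at_left (1::real))" for N
    using eventually_at_left_real[of 0 "1::real"] by (auto elim!: eventually_mono)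
  have partial_sums: "(\<Sum>n<N. B n) \<le> 2 * M\<^sup>2" for N
  proof -
    have "((\<lambda>r. \<Sum>n<N. B n * r ^ (2 * n)) \<longlongrightarrow> (\<Sum>n<N. B n * 1 ^ (2 * n))) (at_left 1)"
      by (intro tendsto_intros)
    from tendsto_upperbound[OF this bound] show ?thesis
      by simp
  qed
  have "summable B"
  proof (rule bounded_imp_summable[OF B_nonneg])
    show "(\<Sum>k\<le>n. B k) \<le> 2 * M\<^sup>2" for n
      using partial_sums[of "Suc n"] by (simp add: lessThan_Suc_atMost)
  qed
  then show "summable (\<lambda>n. if n = 0 then 0 else (norm (a n))\<^sup>2)"
    by (simp add: B_def)
  then show "(\<Sum>n. if n = 0 then 0 else (norm (a n))\<^sup>2) \<le> 2 * M\<^sup>2"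
    using suminf_le_const partial_sums unfolding B_def by blast
qed

lemma exp_mem_carath_class:
  assumes holo: "f holomorphic_on ball 0 1" and Im_bound: "\<And>z. z \<in> ball 0 1 \<Longrightarrow> \<bar>Im (f z)\<bar> < pi / 2"
  shows "(\<lambda>z. exp (f z)) \<in> carath_class"
proof -
  have "0 < Re (exp (f z))" if "z \<in> ball 0 1" for z
    using cos_gt_zero_pi[of "Im (f z)"] Im_bound[OF that] by (simp add: Re_exp)
  then show ?thesis
    using holo by (auto simp: carath_class_def intro!: holomorphic_intros)
qed

lemma carath_class_I_int_expansion:
  assumes "p \<in> carath_class"
  obtains b :: "nat \<Rightarrow> real"
  where "\<And>n. 0 \<le> b n" and "summable b" and "(\<Sum>n. b n) \<le> pi\<^sup>2 / 2"
    and "\<And>r. 0 \<le> r \<Longrightarrow> r < 1 \<Longrightarrow> (\<lambda>n. b n * (real n * r ^ n)\<^sup>2) sums (I_int p r / (2 * pi))"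
proof -
  have holo: "p holomorphic_on ball 0 1" and Re_pos: "\<And>z. z \<in> ball 0 1 \<Longrightarrow> 0 < Re (p z)"
    using assms by (auto simp: carath_class_def)
  define f where "f z = Ln (p z)" for z
  define a where "a n = (deriv ^^ n) f 0 / fact n" for n
  have "p z \<notin> \<real>\<^sub>\<le>\<^sub>0" if "z \<in> ball 0 1" for z
    using Re_pos[OF that] by (auto simp: complex_nonpos_Reals_iff)
  then have "f holomorphic_on ball 0 1"
    unfolding f_def by (rule holomorphic_on_Ln'[OF _ holo])
  then have sums: "(\<lambda>n. a n * z ^ n) sums f z" if "norm z < 1" for z
    using holomorphic_power_series[of f 0 1 z] that by (simp add: a_def)
  have p_exp: "p z = exp (f z)" if "norm z < 1" for z
    using Re_pos[of z] that by (auto simp: f_def intro!: exp_Ln[symmetric])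
  have Im_bound: "\<bar>Im (f z)\<bar> \<le> pi / 2" if "norm z < 1" for z
    using Re_Ln_pos_lt_imp[OF Re_pos[of z]] that by (simp add: f_def)
  \<comment> \<open>\<open>b\<close> omits \<open>a 0 = Ln (p 0)\<close>, whose real part is unbounded over the class but which does not
    contribute to \<open>I_int p\<close>.\<close>
  show ?thesis
  proof
    show "0 \<le> (if n = 0 then 0 else (norm (a n))\<^sup>2)" for n
      by simp
    show "summable (\<lambda>n. if n = 0 then 0 else (norm (a n))\<^sup>2)"
      and "(\<Sum>n. if n = 0 then 0 else (norm (a n))\<^sup>2) \<le> pi\<^sup>2 / 2"
      using power_series_Im_bounded_coeffs[OF sums Im_bound] by (simp_all add: power_divide)
    show "(\<lambda>n. (if n = 0 then 0 else (norm (a n))\<^sup>2) * (real n * r ^ n)\<^sup>2) sums (I_int p r / (2 * pi))"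
      if "0 \<le> r" "r < 1" for r
      using I_int_exp_power_series[OF sums p_exp that] by (rule sums_cong[THEN iffD1, rotated]) auto
  qed
qed

lemma I_int_nonneg: "0 \<le> I_int p r"
proof -
  have "0 \<le> integral S g" if "\<And>x. 0 \<le> g x" for S and g :: "real \<Rightarrow> real"
    using that by (cases "g integrable_on S") (simp_all add: integral_nonneg not_integrable_integral)
  then show ?thesis
    unfolding I_int_def by simp
qed

lemma real_mult_power_le:
  fixes r :: real
  assumes "0 \<le> r" "r < 1"
  shows "real n * r ^ n \<le> 1 / (1 - r)"
proof -
  have "real n * r ^ n = (\<Sum>i<n. r ^ n)"
    by simp
  also have "\<dots> \<le> (\<Sum>i<n. r ^ i)"
    using assms by (intro sum_mono power_decreasing) auto
  also have "\<dots> = (1 - r ^ n) / (1 - r)"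
    using assms by (simp add: sum_gp_strict)
  also have "\<dots> \<le> 1 / (1 - r)"
    using assms by (intro divide_right_mono) auto
  finally show ?thesis .
qed

theorem I_int_le:
  assumes p: "p \<in> carath_class" and r: "0 \<le> r" "r < 1"
  shows "I_int p r \<le> pi ^ 3 / (1 - r)\<^sup>2"
proof -
  obtain b where b_nonneg: "\<And>n. 0 \<le> b n" and b: "summable b" "(\<Sum>n. b n) \<le> pi\<^sup>2 / 2"
    and I_sums: "(\<lambda>n. b n * (real n * r ^ n)\<^sup>2) sums (I_int p r / (2 * pi))"
    using carath_class_I_int_expansion[OF p] r by metis
  have "b n * (real n * r ^ n)\<^sup>2 \<le> b n / (1 - r)\<^sup>2" for n
  proof -
    have "(real n * r ^ n)\<^sup>2 \<le> (1 / (1 - r))\<^sup>2"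
      using r by (intro power_mono real_mult_power_le) auto
    from mult_left_mono[OF this b_nonneg[of n]] show ?thesis
      by (simp add: power_divide)
  qed
  then have "I_int p r / (2 * pi) \<le> (\<Sum>n. b n) / (1 - r)\<^sup>2"
    using sums_le[OF _ I_sums sums_divide[OF summable_sums[OF b(1)]]] by blast
  also have "\<dots> \<le> (pi\<^sup>2 / 2) / (1 - r)\<^sup>2"
    using b(2) by (intro divide_right_mono) auto
  finally have "I_int p r \<le> 2 * pi * (pi\<^sup>2 / 2 / (1 - r)\<^sup>2)"
    by (simp add: pos_divide_le_eq mult.commute)
  also have "\<dots> = pi ^ 3 / (1 - r)\<^sup>2"
    by (simp add: power2_eq_square power3_eq_cube)
  finally show ?thesis .
qed

lemma tendsto_suminf_weighted_power_at_left:
  fixes b :: "nat \<Rightarrow> real"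
  assumes b_nonneg: "\<And>k. 0 \<le> b k" and b: "summable b"
  shows "((\<lambda>r. \<Sum>k. b k * (real k * (1 - r) * r ^ k)\<^sup>2) \<longlongrightarrow> 0) (at_left 1)"
proof -
  define A where "A k r = b k * (real k * (1 - r) * r ^ k)\<^sup>2" for k r
  have "((\<lambda>r. A k r) \<longlongrightarrow> b k * (real k * (1 - 1) * 1 ^ k)\<^sup>2) (at_left 1)" for k
    unfolding A_def by (intro tendsto_intros)
  then have A_lim: "((\<lambda>r. A k r) \<longlongrightarrow> 0) (at_left 1)" for k
    by simp
  have A_le: "norm (A k r) \<le> b k" if "r \<in> {0<..<1}" for k r
  proof -
    have "real k * (1 - r) * r ^ k \<le> 1"
      using real_mult_power_le[of r k] that by (simp add: field_simps)
    then have "(real k * (1 - r) * r ^ k)\<^sup>2 \<le> 1"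
      using that by (intro power_le_one) auto
    then show ?thesis
      using b_nonneg[of k] by (simp add: A_def mult_left_le)
  qed
  have A_bound: "eventually (\<lambda>(k, r). norm (A k r) \<le> b k) (at_top \<times>\<^sub>F at_left 1)"
    unfolding eventually_prod_filter
  proof (intro exI conjI allI impI)
    show "eventually (\<lambda>_. True) sequentially"
      by simp
    show "eventually (\<lambda>r. r \<in> {0<..<1}) (at_left (1::real))"
      by (rule eventually_at_left_real) simp
    show "case (k, r) of (k, r) \<Rightarrow> norm (A k r) \<le> b k" if "True" "r \<in> {0<..<1}" for k r
      using A_le[OF that(2)] by simp
  qed
  show ?thesis
    using tannerys_theorem[OF A_lim A_bound b] by (simp add: A_def)
qed

theorem I_int_smallo:
  assumes p: "p \<in> carath_class"
  shows "(\<lambda>r. I_int p r) \<in> o[at_left 1](\<lambda>r. 1 / (1 - r)\<^sup>2)"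
proof -
  obtain b where b_nonneg: "\<And>n. 0 \<le> b n" and b: "summable b"
    and I_sums: "\<And>r. 0 \<le> r \<Longrightarrow> r < 1 \<Longrightarrow> (\<lambda>n. b n * (real n * r ^ n)\<^sup>2) sums (I_int p r / (2 * pi))"
    using carath_class_I_int_expansion[OF p] by metis
  have "((\<lambda>r. 2 * pi * (\<Sum>k. b k * (real k * (1 - r) * r ^ k)\<^sup>2)) \<longlongrightarrow> 0) (at_left 1)"
    using tendsto_mult_right_zero[OF tendsto_suminf_weighted_power_at_left[OF b_nonneg b]] by simp
  moreover have "eventually (\<lambda>r. 2 * pi * (\<Sum>k. b k * (real k * (1 - r) * r ^ k)\<^sup>2)
                               = I_int p r / (1 / (1 - r)\<^sup>2)) (at_left 1)"
  proof (rule eventually_mono[OF eventually_at_left_real[of 0 1]])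
    fix r :: real
    assume "r \<in> {0<..<1}"
    then have "(\<lambda>k. b k * (real k * r ^ k)\<^sup>2 * (1 - r)\<^sup>2) sums (I_int p r / (2 * pi) * (1 - r)\<^sup>2)"
      by (intro sums_mult2 I_sums) auto
    then have "(\<lambda>k. b k * (real k * (1 - r) * r ^ k)\<^sup>2) sums (I_int p r / (2 * pi) * (1 - r)\<^sup>2)"
      by (rule sums_cong[THEN iffD1, rotated]) (simp add: power_mult_distrib)
    then show "2 * pi * (\<Sum>k. b k * (real k * (1 - r) * r ^ k)\<^sup>2) = I_int p r / (1 / (1 - r)\<^sup>2)"
      by (simp add: sums_iff)
  qed simp
  ultimately have "((\<lambda>r. I_int p r / (1 / (1 - r)\<^sup>2)) \<longlongrightarrow> 0) (at_left 1)"
    by (rule Lim_transform_eventually)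
  moreover have "eventually (\<lambda>r. 1 / (1 - r)\<^sup>2 \<noteq> (0::real)) (at_left 1)"
    using eventually_at_left_real[of 0 "1::real"] by (auto elim!: eventually_mono)
  ultimately show ?thesis
    by (rule smalloI_tendsto)
qed

lemma lacunary_carath_class:
  fixes N :: "nat \<Rightarrow> nat"
  assumes N: "strict_mono N"
  shows "\<exists>p\<in>carath_class. \<forall>k r. 0 \<le> r \<and> r < 1 \<longrightarrow>
           2 * pi * (real (N k) * r ^ N k / 2 ^ Suc k)\<^sup>2 \<le> I_int p r"
proof -
  define a where "a n = (if n \<in> range N then (1 / 2) ^ Suc (inv N n) else 0 :: real)" for n
  have a_N: "a (N k) = (1 / 2) ^ Suc k" for k
    using strict_mono_imp_inj_on[OF N] by (simp add: a_def)
  have "(\<lambda>k. a (N k)) sums 1"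
    unfolding a_N by (rule power_half_series)
  then have "a sums 1"
    by (subst (asm) sums_mono_reindex[OF N]) (auto simp: a_def)
  then have a: "summable a" "(\<Sum>n. a n) = 1"
    by (auto simp: sums_iff)
  define f where "f z = (\<Sum>n. of_real (a n) * z ^ n)" for z :: complex
  have norm_term: "norm (of_real (a n) * z ^ n) \<le> a n" if "norm z < 1" for n and z :: complex
    using that by (simp add: a_def norm_mult norm_power power_le_one mult_left_le)
  then have abs_summable: "summable (\<lambda>n. norm (of_real (a n) * z ^ n))" if "norm z < 1" for z :: complex
    using that by (intro summable_comparison_test[OF _ a(1)]) auto
  have sums: "(\<lambda>n. of_real (a n) * z ^ n) sums f z" if "norm z < 1" for z
    unfolding f_def by (rule summable_sums[OF summable_norm_cancel[OF abs_summable[OF that]]])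
  have "norm (f z) \<le> 1" if "norm z < 1" for z
  proof -
    have "norm (f z) \<le> (\<Sum>n. norm (of_real (a n) * z ^ n))"
      unfolding f_def by (rule summable_norm[OF abs_summable[OF that]])
    also have "\<dots> \<le> (\<Sum>n. a n)"
      by (rule suminf_le[OF norm_term[OF that] abs_summable[OF that] a(1)])
    finally show ?thesis
      using a(2) by simp
  qed
  then have "\<bar>Im (f z)\<bar> < pi / 2" if "norm z < 1" for z
    using abs_Im_le_cmod[of "f z"] pi_gt3 that by fastforce
  moreover have "f holomorphic_on ball 0 1"
    using sums by (intro power_series_holomorphic[where a = "\<lambda>n. of_real (a n)"]) auto
  ultimately have "(\<lambda>z. exp (f z)) \<in> carath_class"
    by (intro exp_mem_carath_class) auto
  moreover have "2 * pi * (real (N k) * r ^ N k / 2 ^ Suc k)\<^sup>2 \<le> I_int (\<lambda>z. exp (f z)) r"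
    if r: "0 \<le> r" "r < 1" for k r
  proof -
    have "(\<lambda>n. (norm (of_real (a n) :: complex))\<^sup>2 * (real n * r ^ n)\<^sup>2)
        sums (I_int (\<lambda>z. exp (f z)) r / (2 * pi))"
      by (rule I_int_exp_power_series[OF sums _ r]) auto
    then have "(norm (of_real (a (N k)) :: complex))\<^sup>2 * (real (N k) * r ^ N k)\<^sup>2
        \<le> I_int (\<lambda>z. exp (f z)) r / (2 * pi)"
      using sum_le_suminf[of _ "{N k}"] by (force simp: sums_iff)
    then show ?thesis
      unfolding a_N norm_of_real by (simp add: power_mult_distrib power_divide field_simps)
  qed
  ultimately show ?thesis
    by blast
qed

lemma not_bigo_along_sequence:
  fixes f g :: "'a \<Rightarrow> real"
  assumes s: "filterlim s F sequentially"
    and pos: "\<And>k. 0 < g (s k)" and grow: "\<And>k. real k * g (s k) \<le> f (s k)"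
  shows "f \<notin> O[F](g)"
proof
  assume "f \<in> O[F](g)"
  then obtain c where "eventually (\<lambda>x. norm (f x) \<le> c * norm (g x)) F"
    by (elim landau_o.bigE)
  from eventually_compose_filterlim[OF this s]
  have "eventually (\<lambda>k. norm (f (s k)) \<le> c * norm (g (s k)) \<and> c < real k) sequentially"
    using eventually_gt_at_top[of "nat \<lceil>c\<rceil>"] by eventually_elim linarith
  then obtain k where k: "norm (f (s k)) \<le> c * norm (g (s k))" "c < real k"
    using eventually_happens'[OF sequentially_bot] by blast
  have "f (s k) \<le> c * g (s k)"
    using k(1) pos[of k] by (auto dest: abs_le_D1)
  then have "real k * g (s k) \<le> c * g (s k)"
    using grow[of k] by linarith
  with k(2) pos[of k] show False
    by (simp add: mult_le_cancel_right_pos)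
qed

lemma strict_mono_sequence_eventually:
  assumes "\<And>k. eventually (P k) sequentially"
  obtains N :: "nat \<Rightarrow> nat" where "strict_mono N" and "\<And>k. P k (N k)"
proof -
  obtain M where M: "\<And>k n. M k \<le> n \<Longrightarrow> P k n"
    using assms unfolding eventually_sequentially by metis
  define N where "N k = Suc k + (\<Sum>j\<le>k. M j)" for k
  have "strict_mono N"
    by (rule strict_monoI_Suc) (simp add: N_def)
  moreover have "P k (N k)" for k
    using member_le_sum[of k "{..k}" M] by (intro M) (auto simp: N_def)
  ultimately show ?thesis
    using that by blast
qed

lemma lacunary_term_lower_bound:
  assumes "1 \<le> n"
  shows "pi * (real n)\<^sup>2 / 4 ^ Suc k \<le> 2 * pi * (real n * (1 - 1 / (4 * real n)) ^ n / 2 ^ Suc k)\<^sup>2"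
proof -
  have "1 + real (2 * n) * (- 1 / (4 * real n)) \<le> (1 + - 1 / (4 * real n)) ^ (2 * n)"
    using assms by (intro Bernoulli_inequality) (auto simp: field_simps)
  moreover have "1 + real (2 * n) * (- 1 / (4 * real n)) = 1 / 2"
    using assms by (simp add: field_simps)
  ultimately have "1 / 2 \<le> ((1 - 1 / (4 * real n)) ^ n)\<^sup>2"
    by (simp add: power_even_eq)
  from mult_left_mono[OF this, of "2 * pi * (real n)\<^sup>2 / 4 ^ Suc k"]
  have "pi * (real n)\<^sup>2 / 4 ^ Suc k \<le> 2 * pi * (real n)\<^sup>2 / 4 ^ Suc k * ((1 - 1 / (4 * real n)) ^ n)\<^sup>2"
    by simp
  moreover have "(4::real) ^ Suc k = (2 ^ Suc k)\<^sup>2"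
    by (simp add: power2_eq_square flip: power_mult_distrib)
  ultimately show ?thesis
    by (simp only:) (simp add: power_mult_distrib power_divide)
qed

theorem I_int_not_bigo:
  fixes \<Phi> :: "real \<Rightarrow> real"
  assumes pos: "\<And>r. 0 < r \<Longrightarrow> r < 1 \<Longrightarrow> 0 < \<Phi> r"
    and small: "\<Phi> \<in> o[at_left 1](\<lambda>r. 1 / (1 - r)\<^sup>2)"
  shows "\<exists>p\<in>carath_class. (\<lambda>r. I_int p r) \<notin> O[at_left 1](\<Phi>)"
proof -
  define \<rho> where "\<rho> n = 1 - 1 / (4 * real n)" for n
  have \<rho>_lim: "filterlim \<rho> (at_left 1) sequentially"
    unfolding \<rho>_def by real_asymp
  have \<rho>: "0 < \<rho> n" "\<rho> n < 1" "1 / (1 - \<rho> n)\<^sup>2 = 16 * (real n)\<^sup>2" if "1 \<le> n" for n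
    using that by (auto simp: \<rho>_def field_simps power2_eq_square)
  have "eventually (\<lambda>n. 1 \<le> n \<and> \<Phi> (\<rho> n) \<le> (real n)\<^sup>2 / (4 ^ Suc k * real (Suc k))) sequentially"
    for k
  proof -
    define \<delta> :: real where "\<delta> = 1 / (16 * 4 ^ Suc k * real (Suc k))"
    have "\<delta> > 0"
      by (simp add: \<delta>_def)
    from eventually_compose_filterlim[OF landau_o.smallD[OF small this] \<rho>_lim]
    show ?thesis
      using eventually_ge_at_top[of "1::nat"]
    proof eventually_elim
      case (elim n)
      then show ?case
        using \<rho>[OF elim(2)] by (auto simp: \<delta>_def mult_ac intro: order_trans[OF abs_ge_self])
    qed
  qed
  then obtain N where N_mono: "strict_mono N"
    and N: "\<And>k. 1 \<le> N k \<and> \<Phi> (\<rho> (N k)) \<le> (real (N k))\<^sup>2 / (4 ^ Suc k * real (Suc k))"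
    by (rule strict_mono_sequence_eventually[where
          P = "\<lambda>k n. 1 \<le> n \<and> \<Phi> (\<rho> n) \<le> (real n)\<^sup>2 / (4 ^ Suc k * real (Suc k))"]) blast
  then have N_ge: "1 \<le> N k" and \<Phi>_le: "\<Phi> (\<rho> (N k)) \<le> (real (N k))\<^sup>2 / (4 ^ Suc k * real (Suc k))"
    for k
    by auto
  obtain p where p: "p \<in> carath_class"
    and I_ge: "\<And>k r. 0 \<le> r \<Longrightarrow> r < 1 \<Longrightarrow> 2 * pi * (real (N k) * r ^ N k / 2 ^ Suc k)\<^sup>2 \<le> I_int p r"
    using lacunary_carath_class[OF N_mono] by blast
  have "real k * \<Phi> (\<rho> (N k)) \<le> I_int p (\<rho> (N k))" for k
  proof -
    define X where "X = (real (N k))\<^sup>2 / 4 ^ Suc k"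
    have "X \<ge> 0"
      by (simp add: X_def)
    have "real k * \<Phi> (\<rho> (N k)) \<le> real k * (X / real (Suc k))"
      using \<Phi>_le[of k] by (intro mult_left_mono) (simp_all add: X_def)
    also have "\<dots> \<le> X"
      using \<open>X \<ge> 0\<close> by (simp add: field_simps)
    also have "\<dots> \<le> pi * X"
      using mult_right_mono[of 1 pi X] \<open>X \<ge> 0\<close> pi_gt3 by simp
    also have "\<dots> \<le> 2 * pi * (real (N k) * \<rho> (N k) ^ N k / 2 ^ Suc k)\<^sup>2"
      using lacunary_term_lower_bound[OF N_ge] by (simp add: X_def \<rho>_def)
    also have "\<dots> \<le> I_int p (\<rho> (N k))"
      using \<rho>(1,2)[OF N_ge] by (intro I_ge) (auto intro: less_imp_le)
    finally show ?thesis .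
  qed
  moreover have "filterlim (\<lambda>k. \<rho> (N k)) (at_left 1) sequentially"
    by (rule filterlim_compose[OF \<rho>_lim filterlim_subseq[OF N_mono]])
  ultimately have "(\<lambda>r. I_int p r) \<notin> O[at_left 1](\<Phi>)"
    using pos \<rho>[OF N_ge] by (intro not_bigo_along_sequence[where s = "\<lambda>k. \<rho> (N k)"]) auto
  with p show ?thesis
    by blast
qed

lemma carath_uniform_exponent_ge:
  assumes "\<forall>p\<in>carath_class. \<forall>r. 0 < r \<and> r < 1 \<longrightarrow> I_int p r \<le> C * (1 - r) powr (- \<alpha>)"
  shows "2 \<le> \<alpha>"
proof (rule ccontr)
  assume "\<not> 2 \<le> \<alpha>"
  then have "(\<lambda>r. (1 - r) powr (- \<alpha>)) \<in> o[at_left 1](\<lambda>r. 1 / (1 - r)\<^sup>2)"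
    by real_asymp
  then obtain p where p: "p \<in> carath_class"
    and not_bigo: "(\<lambda>r. I_int p r) \<notin> O[at_left 1](\<lambda>r. (1 - r) powr (- \<alpha>))"
    using I_int_not_bigo[of "\<lambda>r. (1 - r) powr (- \<alpha>)"] by auto
  have "eventually (\<lambda>r. norm (I_int p r) \<le> C * norm ((1 - r) powr (- \<alpha>))) (at_left 1)"
    using eventually_at_left_real[OF zero_less_one]
    by eventually_elim (use assms p I_int_nonneg in auto)
  then have "(\<lambda>r. I_int p r) \<in> O[at_left 1](\<lambda>r. (1 - r) powr (- \<alpha>))"
    by (rule bigoI)
  with not_bigo show False
    by contradiction
qed

theorem corollary1p4:
  shows
    "(\<exists>C>0. \<forall>p\<in>carath_class. \<forall>r. 0 < r \<and> r < 1 \<longrightarrow> I_int p r \<le> C / (1 - r)\<^sup>2)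
   \<and> (\<forall>p\<in>carath_class. (\<lambda>r. I_int p r) \<in> o[at_left 1](\<lambda>r. 1 / (1 - r)\<^sup>2))
   \<and> (\<forall>\<Phi> :: real \<Rightarrow> real.
        (\<forall>r. 0 < r \<and> r < 1 \<longrightarrow> \<Phi> r > 0) \<and> \<Phi> \<in> o[at_left 1](\<lambda>r. 1 / (1 - r)\<^sup>2)
        \<longrightarrow> (\<exists>p\<in>carath_class. (\<lambda>r. I_int p r) \<notin> O[at_left 1](\<Phi>)))
   \<and> (let S = {\<alpha>::real. \<exists>C::real. \<forall>p\<in>carath_class. \<forall>r. 0 < r \<and> r < 1 \<longrightarrow>
                   I_int p r \<le> C * (1 - r) powr (- \<alpha>)}
      in 2 \<in> S \<and> (\<forall>\<alpha>\<in>S. 2 \<le> \<alpha>))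
   \<and> \<not> (\<forall>p\<in>carath_class. (\<lambda>r. I_int p r) \<in> O[at_left 1](\<lambda>r. 1 / (1 - r)))"
proof (intro conjI)
  show "\<exists>C>0. \<forall>p\<in>carath_class. \<forall>r. 0 < r \<and> r < 1 \<longrightarrow> I_int p r \<le> C / (1 - r)\<^sup>2"
    by (intro exI[of _ "pi ^ 3"]) (auto intro: I_int_le)
  show "\<forall>p\<in>carath_class. (\<lambda>r. I_int p r) \<in> o[at_left 1](\<lambda>r. 1 / (1 - r)\<^sup>2)"
    using I_int_smallo by blast
  show "\<forall>\<Phi> :: real \<Rightarrow> real.
        (\<forall>r. 0 < r \<and> r < 1 \<longrightarrow> \<Phi> r > 0) \<and> \<Phi> \<in> o[at_left 1](\<lambda>r. 1 / (1 - r)\<^sup>2)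
        \<longrightarrow> (\<exists>p\<in>carath_class. (\<lambda>r. I_int p r) \<notin> O[at_left 1](\<Phi>))"
    using I_int_not_bigo by blast
  have "(1 - r) powr (- 2) = 1 / (1 - r)\<^sup>2" if "r < 1" for r :: real
    using that by (simp add: powr_minus divide_inverse)
  then show "let S = {\<alpha>::real. \<exists>C::real. \<forall>p\<in>carath_class. \<forall>r. 0 < r \<and> r < 1 \<longrightarrow>
                   I_int p r \<le> C * (1 - r) powr (- \<alpha>)}
      in 2 \<in> S \<and> (\<forall>\<alpha>\<in>S. 2 \<le> \<alpha>)"
    using I_int_le carath_uniform_exponent_ge by (auto simp: Let_def intro!: exI[of _ "pi ^ 3"])
  have "(\<lambda>r::real. 1 / (1 - r)) \<in> o[at_left 1](\<lambda>r. 1 / (1 - r)\<^sup>2)"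
    by real_asymp
  then show "\<not> (\<forall>p\<in>carath_class. (\<lambda>r. I_int p r) \<in> O[at_left 1](\<lambda>r. 1 / (1 - r)))"
    using I_int_not_bigo[of "\<lambda>r. 1 / (1 - r)"] by auto
qed

end
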